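(* Let $q_{n,k}$ be the number of induced subgraphs of the matchable Lucas cube $\Omega_n$ isomorphic to the $k$-dimensional hypercube $Q_k$. Then: (1) for $n\ge2$, $q_{n,0}=L_n$ and $q_{n,1}=nF_{n-1}$; (2) for $n\ge4$, $q_{n,2}=\frac15 nF_{n-3}+\frac1{10}(n-3)nL_{n-2}$; (3) for $n\ge6$, $q_{n,3}=\frac{2}{25}nF_{n-5}+\frac1{25}(n-5)nL_{n-4}+\frac1{30}(n^2-9n+20)nF_{n-3}$.
   Context: For $n\ge1$ let $\Xi_n$ be the poset on $\{x_1,\dots,x_n\}$ whose cover relations are exactly: $x_2\prec x_1$, $x_3\prec x_2$, and for $3\le i\le n-1$, $x_i\prec x_{i+1}$ if $i$ is odd and $x_{i+1}\prec x_i$ if $i$ is even (so $x_1>x_2>x_3<x_4>x_5<\cdots$). A filter of a poset is an up-closed subset. The matchable Lucas cube $\Omega_n$ is the graph whose vertices are the filters of $\Xi_n$, two filters being adjacent iff one is obtained from the other by deleting a single element (the undirected Hasse diagram of the filter lattice); $\Omega_0$ is the one-vertex graph. $L_n$ are the Lucas numbers ($L_0=2$, $L_1=1$, $L_n=L_{n-1}+L_{n-2}$) and $F_n$ the Fibonacci numbers ($F_0=0$, $F_1=1$, $F_n=F_{n-1}+F_{n-2}$). *)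

theory Defs
  imports Main "HOL-Number_Theory.Fib"
begin

fun lucas :: "nat \<Rightarrow> nat" where
  "lucas 0 = 2"
| "lucas (Suc 0) = 1"
| "lucas (Suc (Suc n)) = lucas (Suc n) + lucas n"

text \<open>Cover relation of the poset Xi_n on {1..n}: xi_cover n i j means x_i is covered by x_j.\<close>
definition xi_cover :: "nat \<Rightarrow> nat \<Rightarrow> nat \<Rightarrow> bool" where
  "xi_cover n i j \<longleftrightarrow>
     (i = 2 \<and> j = 1 \<and> n \<ge> 2)
   \<or> (i = 3 \<and> j = 2 \<and> n \<ge> 3)
   \<or> (\<exists>m. 3 \<le> m \<and> m \<le> n - 1 \<and>
          ((odd m \<and> i = m \<and> j = m + 1) \<or> (even m \<and> i = m + 1 \<and> j = m)))"

definition xi_le :: "nat \<Rightarrow> nat \<Rightarrow> nat \<Rightarrow> bool" where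
  "xi_le n = (xi_cover n)\<^sup>*\<^sup>*"

definition xi_filter :: "nat \<Rightarrow> nat set \<Rightarrow> bool" where
  "xi_filter n F \<longleftrightarrow> F \<subseteq> {1..n} \<and>
     (\<forall>x\<in>F. \<forall>y\<in>{1..n}. xi_le n x y \<longrightarrow> y \<in> F)"

definition omega_vertices :: "nat \<Rightarrow> nat set set" where
  "omega_vertices n = {F. xi_filter n F}"

definition omega_adj :: "nat set \<Rightarrow> nat set \<Rightarrow> bool" where
  "omega_adj A B \<longleftrightarrow> (\<exists>x\<in>A. B = A - {x}) \<or> (\<exists>x\<in>B. A = B - {x})"

definition hypercube_adj :: "nat set \<Rightarrow> nat set \<Rightarrow> bool" where
  "hypercube_adj a b \<longleftrightarrow> card ((a - b) \<union> (b - a)) = 1"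

definition q_count :: "nat \<Rightarrow> nat \<Rightarrow> nat" where
  "q_count n k = card {S. S \<subseteq> omega_vertices n \<and>
     (\<exists>f. bij_betw f (Pow {..<k}) S \<and>
          (\<forall>a\<in>Pow {..<k}. \<forall>b\<in>Pow {..<k}. omega_adj (f a) (f b) \<longleftrightarrow> hypercube_adj a b))}"

end

theory Submission
  imports Defs
begin

text \<open>
  A vertex of Omega_n is a set of indices, and two vertices are adjacent iff their symmetric
  difference is a singleton. In this graph two vertices at distance two have exactly two common
  neighbours, which forces every induced copy of Q_k to be a sub-cube B \<union> T, T \<subseteq> E.
  Since filters are closed under union, such a sub-cube lies in Omega_n iff every element of E
  can be added to B on its own. Hence q_{n,k} is the sum over all filters B of
  (d(B) choose k), where d(B) is the up-degree of B in Omega_n.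

  Appending x_{n+1} above or below x_n changes the filters and their up-degrees in a controlled
  way; two such steps give, for N \<ge> 4, the sum over Omega_N of g(d(B)) as the sum over
  Omega_{N-1} of g(d(B)) plus the sum over Omega_{N-2} of g(d(B) + 1). For g = (- choose k)
  Pascal's rule turns this into q_{N,k} = q_{N-1,k} + q_{N-2,k} + q_{N-2,k-1}, and the closed
  forms follow by induction from the values at N = 2 and N = 3.
\<close>

section \<open>Induced hypercubes in the symmetric-difference graph\<close>

lemma sym_diff_cancel_left: "sym_diff X (sym_diff X Y) = Y"
  by blast

lemma sym_diff_Un_disjoint: "A \<inter> B = {} \<Longrightarrow> sym_diff X (A \<union> B) = sym_diff (sym_diff X A) B"
  by auto

lemma sym_diff_eq_singleton_Diff: "sym_diff A B = {x} \<Longrightarrow> x \<in> A \<Longrightarrow> B = A - {x}"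
  by blast

lemma sym_diff_Un_image:
  assumes "inj_on g A" "a \<subseteq> A" "b \<subseteq> A" "B \<inter> g ` A = {}"
  shows "sym_diff (B \<union> g ` a) (B \<union> g ` b) = g ` sym_diff a b"
proof -
  have "g ` (a - b) = g ` a - g ` b" "g ` (b - a) = g ` b - g ` a"
    using assms(2,3) by (auto intro!: inj_on_image_set_diff[OF assms(1)])
  moreover have "sym_diff (B \<union> g ` a) (B \<union> g ` b) = sym_diff (g ` a) (g ` b)"
    using assms(2-4) by blast
  ultimately show ?thesis
    by (simp add: image_Un)
qed

lemma common_neighbour_sym_diff:
  assumes "p \<noteq> q" "Y \<noteq> X"
    and "is_singleton (sym_diff Y (sym_diff X {p}))" "is_singleton (sym_diff Y (sym_diff X {q}))"
  shows "Y = sym_diff X {p, q}"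
proof -
  obtain u v where u: "sym_diff Y (sym_diff X {p}) = {u}" and v: "sym_diff Y (sym_diff X {q}) = {v}"
    using assms(3,4) by (auto simp: is_singleton_def)
  have "sym_diff X Y \<noteq> {}"
    using assms(2) by blast
  moreover have "sym_diff X Y = sym_diff {p} {u}" "sym_diff X Y = sym_diff {q} {v}"
    using u v by blast+
  ultimately have "sym_diff X Y = {p, q}"
    using assms(1) by (auto simp: set_eq_iff)
  then show ?thesis
    by blast
qed

lemma induced_cube_atoms:
  fixes f :: "nat set \<Rightarrow> 'a set"
  assumes inj: "inj_on f (Pow {..<k})"
    and adj: "\<And>i. i < k \<Longrightarrow> is_singleton (sym_diff (f {}) (f {i}))"
  obtains e where "inj_on e {..<k}" "\<And>i. i < k \<Longrightarrow> f {i} = sym_diff (f {}) {e i}"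
proof -
  obtain e where e: "\<And>i. i < k \<Longrightarrow> sym_diff (f {}) (f {i}) = {e i}"
    using adj unfolding is_singleton_def by metis
  have f_atom: "f {i} = sym_diff (f {}) {e i}" if "i < k" for i
    using sym_diff_cancel_left[of "f {}" "f {i}"] unfolding e[OF that] by (rule sym)
  have "inj_on e {..<k}"
  proof (rule inj_onI)
    fix i j assume "i \<in> {..<k}" "j \<in> {..<k}" "e i = e j"
    then have "f {i} = f {j}"
      using f_atom by simp
    then show "i = j"
      using inj \<open>i \<in> {..<k}\<close> \<open>j \<in> {..<k}\<close> by (auto dest: inj_onD)
  qed
  then show thesis
    using that f_atom by blast
qed

text \<open>
  f a is a neighbour of f (a - {i}) and f (a - {j}) other than f (a - {i, j}), so it is the
  fourth corner of the square they span.
\<close>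

lemma induced_cube_face_step:
  fixes f :: "nat set \<Rightarrow> 'a set"
  assumes inj: "inj_on f (Pow {..<k})"
    and adj: "\<And>a b. a \<subseteq> {..<k} \<Longrightarrow> b \<subseteq> {..<k} \<Longrightarrow> is_singleton (sym_diff a b) \<Longrightarrow>
       is_singleton (sym_diff (f a) (f b))"
    and e_inj: "inj_on e {..<k}"
    and a: "a \<subseteq> {..<k}" "i \<in> a" "j \<in> a" "i \<noteq> j"
    and faces: "\<And>b. b \<subset> a \<Longrightarrow> f b = sym_diff X (e ` b)"
  shows "f a = sym_diff X (e ` a)"
proof -
  define a0 where "a0 = a - {i, j}"
  have a0_sub: "a0 \<union> {i} \<subset> a" "a0 \<union> {j} \<subset> a" "a0 \<subset> a" and a_eq: "a = a0 \<union> {i, j}"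
    using a(2-4) unfolding a0_def by auto
  have e_ij: "e i \<noteq> e j" "e ` a0 \<inter> {e i} = {}" "e ` a0 \<inter> {e j} = {}" "e ` a0 \<inter> {e i, e j} = {}"
    using a e_inj unfolding a0_def inj_on_def by blast+
  have "f (a0 \<union> {i}) = sym_diff (f a0) {e i}" "f (a0 \<union> {j}) = sym_diff (f a0) {e j}"
    "sym_diff X (e ` a) = sym_diff (f a0) {e i, e j}"
    using faces[OF a0_sub(1)] faces[OF a0_sub(2)] faces[OF a0_sub(3)] e_ij a_eq
    by (simp_all add: image_Un sym_diff_Un_disjoint del: Un_insert_right)
  moreover have "f a \<noteq> f a0"
  proof
    assume "f a = f a0"
    then have "a = a0"
      using inj_onD[OF inj] a0_sub(3) a(1) by blast
    then show False
      using a0_sub(3) by blast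
  qed
  moreover have "is_singleton (sym_diff (f a) (f (a0 \<union> {i})))" "is_singleton (sym_diff (f a) (f (a0 \<union> {j})))"
  proof -
    have "sym_diff a (a0 \<union> {i}) = {j}" "sym_diff a (a0 \<union> {j}) = {i}"
      using a(2-4) unfolding a0_def by auto
    moreover have "a0 \<union> {i} \<subseteq> {..<k}" "a0 \<union> {j} \<subseteq> {..<k}"
      using a0_sub a(1) by auto
    ultimately show "is_singleton (sym_diff (f a) (f (a0 \<union> {i})))" "is_singleton (sym_diff (f a) (f (a0 \<union> {j})))"
      using adj[OF a(1)] by simp_all
  qed
  ultimately show ?thesis
    using common_neighbour_sym_diff[OF e_ij(1)] by metis
qed

lemma induced_cube_sym_diff:
  fixes f :: "nat set \<Rightarrow> 'a set"
  assumes inj: "inj_on f (Pow {..<k})"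
    and adj: "\<And>a b. a \<subseteq> {..<k} \<Longrightarrow> b \<subseteq> {..<k} \<Longrightarrow> is_singleton (sym_diff a b) \<Longrightarrow>
       is_singleton (sym_diff (f a) (f b))"
  obtains e where "inj_on e {..<k}" "\<And>a. a \<subseteq> {..<k} \<Longrightarrow> f a = sym_diff (f {}) (e ` a)"
proof -
  have "is_singleton (sym_diff (f {}) (f {i}))" if "i < k" for i
    using adj[of "{}" "{i}"] that by simp
  then obtain e where e_inj: "inj_on e {..<k}" and f_atom: "\<And>i. i < k \<Longrightarrow> f {i} = sym_diff (f {}) {e i}"
    using induced_cube_atoms[OF inj] by blast
  have "f a = sym_diff (f {}) (e ` a)" if "a \<subseteq> {..<k}" for a
    using that
  proof (induction "card a" arbitrary: a rule: less_induct)
    case less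
    consider "a = {}" | i where "a = {i}" | i j where "i \<in> a" "j \<in> a" "i \<noteq> j"
      by (metis insertI1 is_singletonI' is_singleton_the_elem)
    then show ?case
    proof cases
      case (2 i)
      then show ?thesis
        using f_atom less.prems by simp
    next
      case (3 i j)
      have "finite a"
        using less.prems finite_subset by blast
      then have faces: "f b = sym_diff (f {}) (e ` b)" if "b \<subset> a" for b
        using less.hyps[OF psubset_card_mono[OF _ that]] that less.prems by blast
      show ?thesis
        by (rule induced_cube_face_step[OF inj adj e_inj less.prems 3 faces])
    qed simp
  qed
  then show thesis
    using that e_inj by blast
qed

section \<open>Induced hypercubes in union-closed families\<close>

definition addable :: "'a set set \<Rightarrow> 'a set \<Rightarrow> 'a set" where
  "addable V B = {e. e \<notin> B \<and> insert e B \<in> V}"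

lemma finite_addable:
  assumes "finite V"
  shows "finite (addable V B)"
proof (rule finite_imageD)
  show "finite ((\<lambda>e. insert e B) ` addable V B)"
    by (rule finite_subset[OF _ assms]) (auto simp: addable_def)
  show "inj_on (\<lambda>e. insert e B) (addable V B)"
    by (rule inj_onI) (auto simp: addable_def insert_ident)
qed

definition set_cube :: "'a set \<Rightarrow> 'a set \<Rightarrow> 'a set set" where
  "set_cube B E = (\<lambda>T. B \<union> T) ` Pow E"

definition induced_cubes :: "'a set set \<Rightarrow> nat \<Rightarrow> 'a set set set" where
  "induced_cubes V k = {S. S \<subseteq> V \<and> (\<exists>f. bij_betw f (Pow {..<k}) S \<and>
     (\<forall>a\<in>Pow {..<k}. \<forall>b\<in>Pow {..<k}.
        is_singleton (sym_diff (f a) (f b)) \<longleftrightarrow> is_singleton (sym_diff a b)))}"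

lemma set_cube_subset:
  assumes union_closed: "\<And>X Y. X \<in> V \<Longrightarrow> Y \<in> V \<Longrightarrow> X \<union> Y \<in> V"
    and "B \<in> V" "E \<subseteq> addable V B" "finite E"
  shows "set_cube B E \<subseteq> V"
proof -
  have "B \<union> T \<in> V" if "T \<subseteq> E" for T
    using finite_subset[OF that \<open>finite E\<close>] that
  proof (induction T)
    case empty
    then show ?case using \<open>B \<in> V\<close> by simp
  next
    case (insert x T)
    then have "insert x B \<in> V" "B \<union> T \<in> V"
      using \<open>E \<subseteq> addable V B\<close> by (auto simp: addable_def)
    then show ?case
      using union_closed[of "insert x B" "B \<union> T"] by (simp add: insert_commute)
  qed
  then show ?thesis
    unfolding set_cube_def by blast
qed

lemma image_sym_diff_Pow: "(\<lambda>T. sym_diff X T) ` Pow E = set_cube (X - E) E"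
proof (intro set_eqI iffI)
  fix Y assume "Y \<in> (\<lambda>T. sym_diff X T) ` Pow E"
  then obtain T where "T \<subseteq> E" "Y = sym_diff X T"
    by blast
  then have "Y = (X - E) \<union> sym_diff (X \<inter> E) T" "sym_diff (X \<inter> E) T \<in> Pow E"
    by auto
  then show "Y \<in> set_cube (X - E) E"
    unfolding set_cube_def by (rule image_eqI)
next
  fix Y assume "Y \<in> set_cube (X - E) E"
  then obtain T where "T \<subseteq> E" "Y = (X - E) \<union> T"
    unfolding set_cube_def by blast
  then have "Y = sym_diff X (sym_diff (X \<inter> E) T)" "sym_diff (X \<inter> E) T \<in> Pow E"
    by auto
  then show "Y \<in> (\<lambda>T. sym_diff X T) ` Pow E"
    by (rule image_eqI)
qed

lemma induced_cube_is_set_cube: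
  assumes "S \<in> induced_cubes V k"
  obtains B E where "B \<in> V" "E \<subseteq> addable V B" "card E = k" "S = set_cube B E"
proof -
  obtain f where "S \<subseteq> V" and bij: "bij_betw f (Pow {..<k}) S"
    and adj: "\<And>a b. a \<subseteq> {..<k} \<Longrightarrow> b \<subseteq> {..<k} \<Longrightarrow>
      is_singleton (sym_diff (f a) (f b)) \<longleftrightarrow> is_singleton (sym_diff a b)"
    using assms unfolding induced_cubes_def by auto
  obtain e where e_inj: "inj_on e {..<k}" and f_eq: "\<And>a. a \<subseteq> {..<k} \<Longrightarrow> f a = sym_diff (f {}) (e ` a)"
    using induced_cube_sym_diff[of f k] bij adj unfolding bij_betw_def by blast
  define E where "E = e ` {..<k}"
  define B where "B = f {} - E"
  have "S = f ` Pow {..<k}"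
    using bij unfolding bij_betw_def by simp
  also have "\<dots> = (\<lambda>a. sym_diff (f {}) (e ` a)) ` Pow {..<k}"
    by (rule image_cong[OF refl]) (rule f_eq, simp)
  also have "\<dots> = (\<lambda>T. sym_diff (f {}) T) ` ((\<lambda>a. e ` a) ` Pow {..<k})"
    unfolding image_image ..
  also have "(\<lambda>a. e ` a) ` Pow {..<k} = Pow E"
    unfolding E_def by (rule image_Pow_surj) simp
  finally have S_eq: "S = set_cube B E"
    unfolding image_sym_diff_Pow B_def .
  have B_T: "B \<union> T \<in> V" if "T \<subseteq> E" for T
    using S_eq \<open>S \<subseteq> V\<close> that unfolding set_cube_def by blast
  have "B \<in> V"
    using B_T[of "{}"] by simp
  moreover have "E \<subseteq> addable V B"
  proof
    fix x assume "x \<in> E"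
    then have "x \<notin> B" "insert x B \<in> V"
      using B_T[of "{x}"] unfolding B_def by auto
    then show "x \<in> addable V B"
      unfolding addable_def by simp
  qed
  moreover have "card E = k"
    unfolding E_def using card_image[OF e_inj] by simp
  ultimately show ?thesis
    using S_eq that by blast
qed

lemma set_cube_in_induced_cubes:
  assumes union_closed: "\<And>X Y. X \<in> V \<Longrightarrow> Y \<in> V \<Longrightarrow> X \<union> Y \<in> V"
    and "B \<in> V" "E \<subseteq> addable V B" "finite E"
  shows "set_cube B E \<in> induced_cubes V (card E)"
proof -
  let ?k = "card E"
  obtain g where "bij_betw g {..<?k} E"
    using finite_same_card_bij[of "{..<?k}" E] \<open>finite E\<close> by auto
  then have g_inj: "inj_on g {..<?k}" and g_im: "g ` {..<?k} = E"
    unfolding bij_betw_def by auto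
  have "B \<inter> g ` {..<?k} = {}"
    using \<open>E \<subseteq> addable V B\<close> g_im unfolding addable_def by auto
  then have f_sym_diff: "sym_diff (B \<union> g ` a) (B \<union> g ` b) = g ` sym_diff a b"
    if "a \<subseteq> {..<?k}" "b \<subseteq> {..<?k}" for a b
    using sym_diff_Un_image[OF g_inj that] by blast
  have singleton_iff: "is_singleton (g ` C) \<longleftrightarrow> is_singleton C" if "C \<subseteq> {..<?k}" for C
    using card_image[OF inj_on_subset[OF g_inj that]] by (simp add: is_singleton_altdef)
  have "inj_on (\<lambda>a. B \<union> g ` a) (Pow {..<?k})"
  proof (rule inj_onI)
    fix a b assume "a \<in> Pow {..<?k}" "b \<in> Pow {..<?k}" "B \<union> g ` a = B \<union> g ` b"
    then have "g ` sym_diff a b = {}"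
      using f_sym_diff by (metis PowD Diff_cancel Un_absorb)
    then show "a = b"
      by blast
  qed
  moreover have "(\<lambda>a. B \<union> g ` a) ` Pow {..<?k} = set_cube B E"
    unfolding set_cube_def image_Pow_surj[OF g_im, symmetric] image_image ..
  moreover have "is_singleton (sym_diff (B \<union> g ` a) (B \<union> g ` b)) \<longleftrightarrow> is_singleton (sym_diff a b)"
    if "a \<subseteq> {..<?k}" "b \<subseteq> {..<?k}" for a b
    using f_sym_diff[OF that] singleton_iff[of "sym_diff a b"] that by auto
  moreover have "set_cube B E \<subseteq> V"
    using set_cube_subset[OF union_closed assms(2-4)] .
  ultimately show ?thesis
    unfolding induced_cubes_def bij_betw_def by blast
qed

lemma Inter_set_cube: "\<Inter> (set_cube B E) = B"
  unfolding set_cube_def by auto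

lemma Union_set_cube: "\<Union> (set_cube B E) = B \<union> E"
  unfolding set_cube_def by auto

theorem card_induced_cubes:
  assumes "finite V" and union_closed: "\<And>X Y. X \<in> V \<Longrightarrow> Y \<in> V \<Longrightarrow> X \<union> Y \<in> V"
  shows "card (induced_cubes V k) = (\<Sum>B\<in>V. card (addable V B) choose k)"
proof -
  let ?pairs = "SIGMA B:V. {E. E \<subseteq> addable V B \<and> card E = k}"
  have finite_E: "finite E" if "E \<subseteq> addable V B" for B E
    using finite_subset[OF that finite_addable[OF \<open>finite V\<close>]] .
  have "induced_cubes V k = (\<lambda>(B, E). set_cube B E) ` ?pairs"
  proof (intro set_eqI iffI)
    fix S assume "S \<in> induced_cubes V k"
    then show "S \<in> (\<lambda>(B, E). set_cube B E) ` ?pairs"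
      by (rule induced_cube_is_set_cube) force
  next
    fix S assume "S \<in> (\<lambda>(B, E). set_cube B E) ` ?pairs"
    then show "S \<in> induced_cubes V k"
      using set_cube_in_induced_cubes[OF union_closed] finite_E by auto
  qed
  moreover have "inj_on (\<lambda>(B, E). set_cube B E) ?pairs"
  proof (rule inj_onI, clarify)
    fix B E B' E'
    assume "E \<subseteq> addable V B" "E' \<subseteq> addable V B'" "set_cube B E = set_cube B' E'"
    moreover have "E = \<Union> (set_cube B E) - \<Inter> (set_cube B E)" if "E \<subseteq> addable V B" for B E
      using that unfolding Inter_set_cube Union_set_cube addable_def by auto
    ultimately show "B = B' \<and> E = E'"
      by (metis Inter_set_cube)
  qed
  ultimately have "card (induced_cubes V k) = card ?pairs"
    by (simp add: card_image)
  also have "\<dots> = (\<Sum>B\<in>V. card {E. E \<subseteq> addable V B \<and> card E = k})"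
    using \<open>finite V\<close> finite_addable[OF \<open>finite V\<close>]
    by (intro card_SigmaI) (auto intro: finite_subset[of _ "Pow (addable V _)"])
  also have "\<dots> = (\<Sum>B\<in>V. card (addable V B) choose k)"
    using n_subsets[OF finite_addable[OF \<open>finite V\<close>]] by simp
  finally show ?thesis .
qed

section \<open>Filters of the fence Xi_n\<close>

text \<open>ascent i holds iff x_i is covered by x_(i+1) in Xi_n; otherwise x_(i+1) is covered by x_i.\<close>

definition ascent :: "nat \<Rightarrow> bool" where
  "ascent i \<longleftrightarrow> 3 \<le> i \<and> odd i"

definition cover_closed_at :: "nat \<Rightarrow> nat set \<Rightarrow> bool" where
  "cover_closed_at i F \<longleftrightarrow> (if ascent i then i \<in> F \<longrightarrow> Suc i \<in> F else Suc i \<in> F \<longrightarrow> i \<in> F)"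

lemma ascent_pos: "ascent n \<Longrightarrow> 1 \<le> n"
  unfolding ascent_def by simp

lemma xi_cover_iff:
  "xi_cover n i j \<longleftrightarrow>
     (1 \<le> i \<and> j = Suc i \<and> j \<le> n \<and> ascent i) \<or> (1 \<le> j \<and> i = Suc j \<and> i \<le> n \<and> \<not> ascent j)"
  (is "_ \<longleftrightarrow> ?up \<or> ?down")
proof
  assume "xi_cover n i j"
  then show "?up \<or> ?down"
    unfolding xi_cover_def ascent_def by auto
next
  assume "?up \<or> ?down"
  then consider "1 \<le> i" "j = Suc i" "j \<le> n" "ascent i" | "j = 1 \<or> j = 2" "i = Suc j" "i \<le> n"
    | "3 \<le> j" "i = Suc j" "i \<le> n" "\<not> ascent j"
    by linarith
  then show "xi_cover n i j"
    by cases (auto simp: xi_cover_def ascent_def)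
qed

lemma xi_filter_iff:
  "xi_filter n F \<longleftrightarrow> F \<subseteq> {1..n} \<and> (\<forall>i\<in>{1..<n}. cover_closed_at i F)"
proof -
  have "(\<forall>i j. xi_cover n i j \<longrightarrow> i \<in> F \<longrightarrow> j \<in> F) \<longleftrightarrow> (\<forall>i\<in>{1..<n}. cover_closed_at i F)"
  proof (intro iffI ballI allI impI)
    fix i assume closed: "\<forall>i j. xi_cover n i j \<longrightarrow> i \<in> F \<longrightarrow> j \<in> F" and "i \<in> {1..<n}"
    then show "cover_closed_at i F"
      using closed[rule_format, of i "Suc i"] closed[rule_format, of "Suc i" i]
      unfolding cover_closed_at_def xi_cover_iff by auto
  next
    fix i j assume closed: "\<forall>i\<in>{1..<n}. cover_closed_at i F" and "xi_cover n i j" "i \<in> F"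
    then consider "i \<in> {1..<n}" "j = Suc i" "ascent i" | "j \<in> {1..<n}" "i = Suc j" "\<not> ascent j"
      unfolding xi_cover_iff by fastforce
    then show "j \<in> F"
      using closed \<open>i \<in> F\<close> unfolding cover_closed_at_def by cases auto
  qed
  moreover have "(\<forall>x\<in>F. \<forall>y. xi_le n x y \<longrightarrow> y \<in> F) \<longleftrightarrow> (\<forall>i j. xi_cover n i j \<longrightarrow> i \<in> F \<longrightarrow> j \<in> F)"
  proof (intro iffI allI impI ballI)
    fix i j assume "\<forall>x\<in>F. \<forall>y. xi_le n x y \<longrightarrow> y \<in> F" "xi_cover n i j" "i \<in> F"
    then show "j \<in> F"
      unfolding xi_le_def by blast
  next
    fix x y assume closed: "\<forall>i j. xi_cover n i j \<longrightarrow> i \<in> F \<longrightarrow> j \<in> F" and "x \<in> F" "xi_le n x y"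
    from \<open>xi_le n x y\<close> show "y \<in> F"
      unfolding xi_le_def by (induction rule: rtranclp_induct) (use closed \<open>x \<in> F\<close> in blast)+
  qed
  moreover have "xi_le n x y \<Longrightarrow> x \<in> {1..n} \<Longrightarrow> y \<in> {1..n}" for x y
    unfolding xi_le_def by (induction rule: rtranclp_induct) (auto simp: xi_cover_iff)
  ultimately show ?thesis
    unfolding xi_filter_def by blast
qed

lemma omega_vertices_iff:
  "F \<in> omega_vertices n \<longleftrightarrow> F \<subseteq> {1..n} \<and> (\<forall>i\<in>{1..<n}. cover_closed_at i F)"
  unfolding omega_vertices_def xi_filter_iff by simp

lemma omega_vertices_le: "G \<in> omega_vertices n \<Longrightarrow> i \<in> G \<Longrightarrow> i \<le> n"
  unfolding omega_vertices_iff by auto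

lemma Suc_notin_omega_vertices: "G \<in> omega_vertices n \<Longrightarrow> Suc n \<notin> G"
  using omega_vertices_le by fastforce

lemma omega_vertices_Suc:
  assumes "1 \<le> n"
  shows "F \<in> omega_vertices (Suc n) \<longleftrightarrow> F - {Suc n} \<in> omega_vertices n \<and> cover_closed_at n F"
proof -
  have "{1..<Suc n} = insert n {1..<n}"
    using assms by auto
  moreover have "cover_closed_at i (F - {Suc n}) = cover_closed_at i F" if "i < n" for i
    using that unfolding cover_closed_at_def by auto
  moreover have "F \<subseteq> {1..Suc n} \<longleftrightarrow> F - {Suc n} \<subseteq> {1..n}"
    by auto
  ultimately show ?thesis
    unfolding omega_vertices_iff by auto
qed

lemma omega_vertices_Suc_descent:
  assumes "\<not> ascent n" "1 \<le> n"
  shows "omega_vertices (Suc n) = omega_vertices n \<union> insert (Suc n) ` {G \<in> omega_vertices n. n \<in> G}"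
proof (intro set_eqI iffI)
  fix F assume "F \<in> omega_vertices (Suc n)"
  then show "F \<in> omega_vertices n \<union> insert (Suc n) ` {G \<in> omega_vertices n. n \<in> G}"
    using assms unfolding omega_vertices_Suc[OF assms(2)] cover_closed_at_def
    by (cases "Suc n \<in> F") (auto intro!: image_eqI[of F _ "F - {Suc n}"])
next
  fix F assume F: "F \<in> omega_vertices n \<union> insert (Suc n) ` {G \<in> omega_vertices n. n \<in> G}"
  then show "F \<in> omega_vertices (Suc n)"
    using Suc_notin_omega_vertices assms unfolding omega_vertices_Suc[OF assms(2)] cover_closed_at_def
    by auto
qed

lemma omega_vertices_Suc_ascent:
  assumes "ascent n"
  shows "omega_vertices (Suc n) = insert (Suc n) ` omega_vertices n \<union> {G \<in> omega_vertices n. n \<notin> G}"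
proof (intro set_eqI iffI)
  fix F assume "F \<in> omega_vertices (Suc n)"
  then show "F \<in> insert (Suc n) ` omega_vertices n \<union> {G \<in> omega_vertices n. n \<notin> G}"
    using assms unfolding omega_vertices_Suc[OF ascent_pos[OF assms]] cover_closed_at_def
    by (cases "Suc n \<in> F") (auto intro!: image_eqI[of F _ "F - {Suc n}"])
next
  fix F assume F: "F \<in> insert (Suc n) ` omega_vertices n \<union> {G \<in> omega_vertices n. n \<notin> G}"
  then show "F \<in> omega_vertices (Suc n)"
    using Suc_notin_omega_vertices assms unfolding omega_vertices_Suc[OF ascent_pos[OF assms]] cover_closed_at_def
    by auto
qed

lemma finite_omega_vertices: "finite (omega_vertices n)"
proof (rule finite_subset)
  show "omega_vertices n \<subseteq> Pow {1..n}"
    using omega_vertices_iff by blast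
qed simp

lemma addable_omega_vertices_le: "e \<in> addable (omega_vertices n) G \<Longrightarrow> e \<le> n"
  unfolding addable_def using omega_vertices_le by blast

lemma addable_insert_top:
  assumes "1 \<le> n" "G \<in> omega_vertices n" "ascent n \<or> n \<in> G"
  shows "addable (omega_vertices (Suc n)) (insert (Suc n) G) = addable (omega_vertices n) G"
  using assms Suc_notin_omega_vertices[OF assms(2)] Suc_notin_omega_vertices[of "insert _ G" n]
  unfolding addable_def omega_vertices_Suc[OF assms(1)] cover_closed_at_def
  by (auto simp: insert_Diff_if insert_commute[of _ "Suc n"])

lemma addable_Suc_descent:
  assumes "\<not> ascent n" "1 \<le> n" "G \<in> omega_vertices n"
  shows "addable (omega_vertices (Suc n)) G = addable (omega_vertices n) G \<union> (if n \<in> G then {Suc n} else {})"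
  using assms Suc_notin_omega_vertices[OF assms(3)] Suc_notin_omega_vertices[of "insert _ G" n]
  unfolding addable_def omega_vertices_Suc[OF assms(2)] cover_closed_at_def
  by (auto simp: insert_Diff_if)

lemma addable_Suc_ascent:
  assumes "ascent n" "G \<in> omega_vertices n" "n \<notin> G"
  shows "addable (omega_vertices (Suc n)) G = insert (Suc n) (addable (omega_vertices n) G - {n})"
  using assms Suc_notin_omega_vertices[OF assms(2)] Suc_notin_omega_vertices[of "insert _ G" n]
  unfolding addable_def omega_vertices_Suc[OF ascent_pos[OF assms(1)]] cover_closed_at_def
  by (auto simp: insert_Diff_if)

section \<open>Sums over the up-degrees of the filters\<close>

lemma sum_image_insert:
  assumes "\<And>G. G \<in> A \<Longrightarrow> m \<notin> G"
  shows "(\<Sum>F\<in>insert m ` A. h F) = (\<Sum>G\<in>A. h (insert m G))"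
proof (rule sum.reindex_cong)
  show "inj_on (insert m) A"
    using assms by (intro inj_onI) (metis insert_ident)
qed simp_all

abbreviation up_degree :: "nat \<Rightarrow> nat set \<Rightarrow> nat" where
  "up_degree n F \<equiv> card (addable (omega_vertices n) F)"

definition degree_sum :: "nat \<Rightarrow> (nat \<Rightarrow> nat) \<Rightarrow> nat" where
  "degree_sum n g = (\<Sum>F\<in>omega_vertices n. g (up_degree n F))"

definition top_degree_sum :: "nat \<Rightarrow> (nat \<Rightarrow> nat) \<Rightarrow> nat" where
  "top_degree_sum n g = (\<Sum>F\<in>{F \<in> omega_vertices n. n \<in> F}. g (up_degree n F))"

lemma degree_sum_split:
  "degree_sum n g = top_degree_sum n g
     + (\<Sum>F\<in>{F \<in> omega_vertices n. n \<notin> F}. g (up_degree n F))"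
proof -
  have "omega_vertices n \<inter> {F. n \<in> F} = {F \<in> omega_vertices n. n \<in> F}"
    "omega_vertices n - {F. n \<in> F} = {F \<in> omega_vertices n. n \<notin> F}"
    by auto
  then show ?thesis
    unfolding degree_sum_def top_degree_sum_def
    using sum.Int_Diff[OF finite_omega_vertices, of _ n "{F. n \<in> F}"] by simp
qed

lemma top_degree_sum_Suc_ascent:
  assumes "ascent n"
  shows "top_degree_sum (Suc n) g = degree_sum n g"
proof -
  have top: "{F \<in> omega_vertices (Suc n). Suc n \<in> F} = insert (Suc n) ` omega_vertices n"
    using Suc_notin_omega_vertices unfolding omega_vertices_Suc_ascent[OF assms] by auto
  have "top_degree_sum (Suc n) g
      = (\<Sum>G\<in>omega_vertices n. g (up_degree (Suc n) (insert (Suc n) G)))"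
    unfolding top_degree_sum_def top by (rule sum_image_insert) (rule Suc_notin_omega_vertices)
  also have "\<dots> = degree_sum n g"
    unfolding degree_sum_def using addable_insert_top[OF ascent_pos[OF assms]] assms by simp
  finally show ?thesis .
qed

lemma top_degree_sum_Suc_descent:
  assumes "\<not> ascent n" "1 \<le> n"
  shows "top_degree_sum (Suc n) g = top_degree_sum n g"
proof -
  have top: "{F \<in> omega_vertices (Suc n). Suc n \<in> F} = insert (Suc n) ` {G \<in> omega_vertices n. n \<in> G}"
    using Suc_notin_omega_vertices unfolding omega_vertices_Suc_descent[OF assms] by auto
  have "top_degree_sum (Suc n) g
      = (\<Sum>G\<in>{G \<in> omega_vertices n. n \<in> G}. g (up_degree (Suc n) (insert (Suc n) G)))"
    unfolding top_degree_sum_def top by (rule sum_image_insert) (auto dest: Suc_notin_omega_vertices)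
  also have "\<dots> = top_degree_sum n g"
    unfolding top_degree_sum_def using addable_insert_top[OF assms(2)] by simp
  finally show ?thesis .
qed

lemma degree_sum_Suc_descent:
  assumes "\<not> ascent n" "1 \<le> n"
  shows "degree_sum (Suc n) g = degree_sum n g + top_degree_sum n (\<lambda>d. g (Suc d))"
proof -
  have bottom: "{F \<in> omega_vertices (Suc n). Suc n \<notin> F} = omega_vertices n"
    using Suc_notin_omega_vertices unfolding omega_vertices_Suc_descent[OF assms] by auto
  have "up_degree (Suc n) G = (if n \<in> G then Suc (up_degree n G) else up_degree n G)"
    if "G \<in> omega_vertices n" for G
  proof -
    have "Suc n \<notin> addable (omega_vertices n) G"
      using addable_omega_vertices_le by fastforce
    then show ?thesis
      using addable_Suc_descent[OF assms that] finite_addable[OF finite_omega_vertices] by simp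
  qed
  then have "(\<Sum>F\<in>{F \<in> omega_vertices (Suc n). Suc n \<notin> F}. g (up_degree (Suc n) F))
      = (\<Sum>G\<in>omega_vertices n. if n \<in> G then g (Suc (up_degree n G)) else g (up_degree n G))"
    unfolding bottom by (auto intro!: sum.cong)
  also have "\<dots> = top_degree_sum n (\<lambda>d. g (Suc d)) + (\<Sum>G\<in>{G \<in> omega_vertices n. n \<notin> G}. g (up_degree n G))"
    unfolding top_degree_sum_def sum.If_cases[OF finite_omega_vertices]
    by (auto intro!: arg_cong2[where f = "(+)"] sum.cong)
  finally show ?thesis
    unfolding degree_sum_split[of "Suc n"] degree_sum_split[of n] top_degree_sum_Suc_descent[OF assms]
    by simp
qed

lemma degree_sum_across_ascent:
  assumes "\<not> ascent n" "ascent (Suc n)" "1 \<le> n"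
  shows "degree_sum (Suc (Suc n)) g = degree_sum (Suc n) g + degree_sum n (\<lambda>d. g (Suc d))"
proof -
  have bottom: "{F \<in> omega_vertices (Suc (Suc n)). Suc (Suc n) \<notin> F} = omega_vertices n"
    using Suc_notin_omega_vertices omega_vertices_le[of _ n "Suc (Suc n)"]
    unfolding omega_vertices_Suc_ascent[OF assms(2)] omega_vertices_Suc_descent[OF assms(1,3)] by fastforce
  have "up_degree (Suc (Suc n)) G = Suc (up_degree n G)"
    if "G \<in> omega_vertices n" for G
  proof -
    have "G \<in> omega_vertices (Suc n)" "Suc n \<notin> G"
      using that Suc_notin_omega_vertices unfolding omega_vertices_Suc_descent[OF assms(1,3)] by auto
    then have "addable (omega_vertices (Suc (Suc n))) G
        = insert (Suc (Suc n)) (addable (omega_vertices (Suc n)) G - {Suc n})"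
      by (rule addable_Suc_ascent[OF assms(2)])
    also have "addable (omega_vertices (Suc n)) G - {Suc n} = addable (omega_vertices n) G"
      using addable_Suc_descent[OF assms(1,3) that] addable_omega_vertices_le[of "Suc n" n G] by auto
    finally have "addable (omega_vertices (Suc (Suc n))) G = insert (Suc (Suc n)) (addable (omega_vertices n) G)" .
    moreover have "Suc (Suc n) \<notin> addable (omega_vertices n) G"
      using addable_omega_vertices_le by fastforce
    ultimately show ?thesis
      using finite_addable[OF finite_omega_vertices] by simp
  qed
  then show ?thesis
    unfolding degree_sum_split[of "Suc (Suc n)"] top_degree_sum_Suc_ascent[OF assms(2)] bottom
    by (simp add: degree_sum_def)
qed

lemma degree_sum_rec:
  assumes "4 \<le> n"
  shows "degree_sum n g = degree_sum (n - 1) g + degree_sum (n - 2) (\<lambda>d. g (Suc d))"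
proof (cases "even n") \<comment> \<open>x_n lies above x_(n-1) iff n is even\<close>
  case True
  define m where "m = n - 2"
  have "n = Suc (Suc m)" "\<not> ascent m" "ascent (Suc m)" "1 \<le> m"
    using assms True unfolding m_def ascent_def by auto
  then show ?thesis
    using degree_sum_across_ascent by simp
next
  case False
  then have "5 \<le> n"
    using assms by (cases "n = 4") auto
  define m where "m = n - 3"
  have "n = Suc (Suc (Suc m))" "\<not> ascent (Suc (Suc m))" "ascent (Suc m)"
    using \<open>5 \<le> n\<close> False unfolding m_def ascent_def by auto
  then show ?thesis
    using degree_sum_Suc_descent[of "Suc (Suc m)"] top_degree_sum_Suc_ascent[of "Suc m"] by simp
qed

lemma omega_vertices_1: "omega_vertices 1 = {{}, {1}}"
  by (rule set_eqI) (simp add: omega_vertices_iff subset_singleton_iff)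

lemma degree_sum_1: "degree_sum 1 g = g 0 + g 1"
  and top_degree_sum_1: "top_degree_sum 1 g = g 0"
proof -
  have "addable (omega_vertices 1) {} = {1}" "addable (omega_vertices 1) {1} = {}"
    unfolding omega_vertices_1 addable_def by auto
  moreover have "{F \<in> omega_vertices 1. 1 \<in> F} = {{1}}"
    unfolding omega_vertices_1 by auto
  ultimately show "degree_sum 1 g = g 0 + g 1" "top_degree_sum 1 g = g 0"
    unfolding degree_sum_def top_degree_sum_def omega_vertices_1 by simp_all
qed

lemma degree_sum_2: "degree_sum 2 g = g 0 + 2 * g 1"
  using degree_sum_Suc_descent[of 1 g] degree_sum_1 top_degree_sum_1
  by (simp add: ascent_def numeral_2_eq_2)

lemma degree_sum_3: "degree_sum 3 g = g 0 + 3 * g 1"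
  using degree_sum_Suc_descent[of 2 g] degree_sum_2 top_degree_sum_Suc_descent[of 1] top_degree_sum_1
  by (simp add: ascent_def numeral_3_eq_3 numeral_2_eq_2)

section \<open>Counting the hypercubes\<close>

lemma omega_adj_iff: "omega_adj A B \<longleftrightarrow> is_singleton (sym_diff A B)"
proof
  assume "omega_adj A B"
  then obtain x where "x \<in> A \<and> B = A - {x} \<or> x \<in> B \<and> A = B - {x}"
    unfolding omega_adj_def by blast
  then have "sym_diff A B = {x}"
    by (elim disjE conjE) auto
  then show "is_singleton (sym_diff A B)"
    by simp
next
  assume "is_singleton (sym_diff A B)"
  then obtain x where x: "sym_diff A B = {x}"
    by (rule is_singletonE)
  show "omega_adj A B"
  proof (cases "x \<in> A")
    case True
    then show ?thesis
      using sym_diff_eq_singleton_Diff[OF x] unfolding omega_adj_def by blast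
  next
    case False
    then have "x \<in> B" "sym_diff B A = {x}"
      using x by (blast, simp add: Un_commute)
    then show ?thesis
      using sym_diff_eq_singleton_Diff[of B A x] unfolding omega_adj_def by blast
  qed
qed

lemma hypercube_adj_iff: "hypercube_adj a b \<longleftrightarrow> is_singleton (sym_diff a b)"
  unfolding hypercube_adj_def by (simp add: is_singleton_altdef)

lemma omega_vertices_Un: "A \<in> omega_vertices n \<Longrightarrow> B \<in> omega_vertices n \<Longrightarrow> A \<union> B \<in> omega_vertices n"
  unfolding omega_vertices_def xi_filter_def by blast

lemma q_count_eq_degree_sum: "q_count n k = degree_sum n (\<lambda>d. d choose k)"
proof -
  have "q_count n k = card (induced_cubes (omega_vertices n) k)"
    unfolding q_count_def induced_cubes_def omega_adj_iff hypercube_adj_iff ..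
  also have "\<dots> = degree_sum n (\<lambda>d. d choose k)"
    unfolding degree_sum_def by (rule card_induced_cubes[OF finite_omega_vertices omega_vertices_Un])
  finally show ?thesis .
qed

lemma q_count_rec:
  assumes "2 \<le> n"
  shows "q_count (n + 2) 0 = q_count (n + 1) 0 + q_count n 0"
    and "0 < k \<Longrightarrow> q_count (n + 2) k = q_count (n + 1) k + q_count n k + q_count n (k - 1)"
proof -
  have rec: "q_count (n + 2) j = q_count (n + 1) j + degree_sum n (\<lambda>d. Suc d choose j)" for j
    using degree_sum_rec[of "n + 2" "\<lambda>d. d choose j"] assms by (simp add: q_count_eq_degree_sum)
  show "q_count (n + 2) 0 = q_count (n + 1) 0 + q_count n 0"
    using rec[of 0] by (simp add: q_count_eq_degree_sum)
  assume "0 < k"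
  then have "Suc d choose k = (d choose k) + (d choose (k - 1))" for d
    by (cases k) simp_all
  then show "q_count (n + 2) k = q_count (n + 1) k + q_count n k + q_count n (k - 1)"
    using rec[of k] by (simp add: q_count_eq_degree_sum degree_sum_def sum.distrib)
qed

lemma q_count_2: "q_count 2 k = (0 choose k) + 2 * (1 choose k)"
  and q_count_3: "q_count 3 k = (0 choose k) + 3 * (1 choose k)"
  by (simp_all add: q_count_eq_degree_sum degree_sum_2 degree_sum_3)

lemma lucas_Suc_eq_fib: "lucas (Suc n) = fib (Suc (Suc n)) + fib n"
  by (induction n rule: fib.induct) simp_all

lemma q_count_vertices: "q_count (m + 2) 0 = lucas (m + 2)"
proof (induction m rule: fib.induct)
  case (3 m)
  then show ?case
    using q_count_rec(1)[of "m + 2"] by (simp add: add.assoc)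
qed (use q_count_2 q_count_3 in \<open>simp_all add: eval_nat_numeral\<close>)

lemma q_count_edges: "q_count (m + 2) 1 = (m + 2) * fib (m + 1)"
proof (induction m rule: fib.induct)
  case (3 m)
  then show ?case
    using q_count_rec(2)[of "m + 2" 1] q_count_vertices[of m] by (simp add: lucas_Suc_eq_fib algebra_simps)
qed (use q_count_2 q_count_3 in \<open>simp_all add: eval_nat_numeral\<close>)

lemma q_count_small:
  "q_count 4 2 = 2" "q_count 5 2 = 5" "q_count 4 3 = 0" "q_count 5 3 = 0" "q_count 6 3 = 2" "q_count 7 3 = 7"
proof -
  have small: "q_count 2 1 = 2" "q_count 2 2 = 0" "q_count 2 3 = 0"
    "q_count 3 1 = 3" "q_count 3 2 = 0" "q_count 3 3 = 0"
    by (simp_all add: q_count_2 q_count_3 binomial_eq_0)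
  show q42: "q_count 4 2 = 2" and q52: "q_count 5 2 = 5"
    using q_count_rec(2)[of 2 2] q_count_rec(2)[of 3 2] small by simp_all
  show q43: "q_count 4 3 = 0" and q53: "q_count 5 3 = 0"
    using q_count_rec(2)[of 2 3] q_count_rec(2)[of 3 3] small q42 by simp_all
  show "q_count 6 3 = 2" "q_count 7 3 = 7"
    using q_count_rec(2)[of 4 3] q_count_rec(2)[of 5 3] q42 q52 q43 q53 by simp_all
qed

lemma q_count_squares:
  "10 * q_count (m + 4) 2 = 2 * (m + 4) * fib (m + 1) + (m + 1) * (m + 4) * lucas (m + 2)"
proof (induction m rule: fib.induct)
  case (3 m)
  have "q_count (m + 4) 1 = (m + 4) * fib (Suc (Suc (Suc m)))"
    using q_count_edges[of "m + 2"] by (simp add: eval_nat_numeral)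
  then show ?case
    using 3 q_count_rec(2)[of "m + 4" 2] by (simp add: lucas_Suc_eq_fib algebra_simps)
qed (use q_count_small in \<open>simp_all add: eval_nat_numeral\<close>)

lemma q_count_cubes:
  "150 * q_count (m + 6) 3 = 12 * (m + 6) * fib (m + 1) + 6 * (m + 1) * (m + 6) * lucas (m + 2)
     + 5 * (m + 1) * (m + 2) * (m + 6) * fib (Suc (Suc (Suc m)))"
proof (induction m rule: fib.induct)
  case (3 m)
  have "10 * q_count (m + 6) 2
      = 2 * (m + 6) * fib (Suc (Suc (Suc m))) + (m + 3) * (m + 6) * lucas (Suc (Suc (Suc (Suc m))))"
    using q_count_squares[of "m + 2"] by (simp add: eval_nat_numeral)
  then show ?case
    using 3 q_count_rec(2)[of "m + 6" 3] by (simp add: lucas_Suc_eq_fib algebra_simps)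
qed (use q_count_small in \<open>simp_all add: eval_nat_numeral\<close>)

theorem mainTheorem7:
  shows "(\<forall>n\<ge>2. q_count n 0 = lucas n \<and> q_count n 1 = n * fib (n - 1))
       \<and> (\<forall>n\<ge>4. real (q_count n 2) =
            real n * real (fib (n - 3)) / 5 + (real n - 3) * real n * real (lucas (n - 2)) / 10)
       \<and> (\<forall>n\<ge>6. real (q_count n 3) =
            2 / 25 * real n * real (fib (n - 5)) + (real n - 5) * real n * real (lucas (n - 4)) / 25
            + ((real n)\<^sup>2 - 9 * real n + 20) * real n * real (fib (n - 3)) / 30)"
proof (intro conjI allI impI)
  fix n :: nat assume "2 \<le> n"
  then obtain m where n: "n = m + 2"
    by (metis le_add_diff_inverse2)
  then have "n - 1 = m + 1"
    by simp
  with q_count_vertices[of m, folded n] q_count_edges[of m, folded n]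
  show "q_count n 0 = lucas n" "q_count n 1 = n * fib (n - 1)"
    by simp_all
next
  fix n :: nat assume "4 \<le> n"
  then obtain m where n: "n = m + 4"
    by (metis le_add_diff_inverse2)
  have "n - 3 = m + 1" "n - 2 = m + 2" "real n = real m + 4"
    unfolding n by simp_all
  with arg_cong[OF q_count_squares[of m, folded n], of real] show "real (q_count n 2) =
      real n * real (fib (n - 3)) / 5 + (real n - 3) * real n * real (lucas (n - 2)) / 10"
    by (simp add: field_simps)
next
  fix n :: nat assume "6 \<le> n"
  then obtain m where n: "n = m + 6"
    by (metis le_add_diff_inverse2)
  have "n - 5 = m + 1" "n - 4 = m + 2" "n - 3 = Suc (Suc (Suc m))" "real n = real m + 6"
    unfolding n by simp_all
  with arg_cong[OF q_count_cubes[of m, folded n], of real] show "real (q_count n 3) =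
      2 / 25 * real n * real (fib (n - 5)) + (real n - 5) * real n * real (lucas (n - 4)) / 25
      + ((real n)\<^sup>2 - 9 * real n + 20) * real n * real (fib (n - 3)) / 30"
    by (simp add: field_simps power2_eq_square)
qed

end
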